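(* Let $f,f_0$ be probability densities on $[0,1]$ with $f_0$ bounded. Let $g\in L^\infty[0,1]$ and $C_1,C_2>0$ be such that $h(f,f_0)\|g\|_\infty\le C_1$ and $\|g\|_2\le C_2$. Then $$\Big|\int_0^1g^2(f-f_0)\Big|\le C_1^2+C_1\sqrt{4C_2^2\|f_0\|_\infty+C_1^2}.$$
   Context: $h$ is the Hellinger distance, $h(f,f_0)^2=\int_0^1(\sqrt f-\sqrt{f_0})^2$. $\|\cdot\|_2$ and $\|\cdot\|_\infty$ are the $L^2[0,1]$ and sup norms. *)

theory Defs
  imports "HOL-Analysis.Analysis"
begin

definition prob_density01 :: "(real \<Rightarrow> real) \<Rightarrow> bool" where
  "prob_density01 f \<longleftrightarrow> f \<in> borel_measurable lborel \<and> (\<forall>x\<in>{0..1}. 0 \<le> f x)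
     \<and> set_integrable lborel {0..1} f \<and> (LINT x:{0..1}|lborel. f x) = 1"

definition hellinger :: "(real \<Rightarrow> real) \<Rightarrow> (real \<Rightarrow> real) \<Rightarrow> real" where
  "hellinger f f0 = sqrt (LINT x:{0..1}|lborel. (sqrt (f x) - sqrt (f0 x))^2)"

definition sup_norm01 :: "(real \<Rightarrow> real) \<Rightarrow> real" where
  "sup_norm01 g = (SUP x\<in>{0..1}. \<bar>g x\<bar>)"

definition L2_norm01 :: "(real \<Rightarrow> real) \<Rightarrow> real" where
  "L2_norm01 g = sqrt (LINT x:{0..1}|lborel. (g x)^2)"

end

theory Submission
  imports Defs
begin

text \<open>With \<open>d = \<surd>f - \<surd>f\<^sub>0\<close> one has \<open>f - f\<^sub>0 = d\<^sup>2 + 2 d \<surd>f\<^sub>0\<close>, and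
  \<open>2 |d| \<surd>f\<^sub>0 \<le> t d\<^sup>2 + f\<^sub>0 / t\<close> for every \<open>t > 0\<close>. Integrating against \<open>g\<^sup>2\<close> gives
  \<open>|\<integral> g\<^sup>2 (f - f\<^sub>0)| \<le> (1 + t) \<integral> g\<^sup>2 d\<^sup>2 + (1/t) \<integral> g\<^sup>2 f\<^sub>0
     \<le> (1 + t) \<parallel>g\<parallel>\<^sub>\<infinity>\<^sup>2 h\<^sup>2 + (1/t) \<parallel>f\<^sub>0\<parallel>\<^sub>\<infinity> \<parallel>g\<parallel>\<^sub>2\<^sup>2
     \<le> (1 + t) C\<^sub>1\<^sup>2 + (1/t) \<parallel>f\<^sub>0\<parallel>\<^sub>\<infinity> C\<^sub>2\<^sup>2\<close>,
  and the choice \<open>t = C\<^sub>2 \<surd>\<parallel>f\<^sub>0\<parallel>\<^sub>\<infinity> / C\<^sub>1\<close> turns the right-hand side into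
  \<open>C\<^sub>1\<^sup>2 + 2 C\<^sub>1 C\<^sub>2 \<surd>\<parallel>f\<^sub>0\<parallel>\<^sub>\<infinity>\<close>, which is at most the claimed bound.\<close>

lemma abs_diff_le_sqrt_diff_square:
  fixes u v t :: real
  assumes "0 \<le> u" "0 \<le> v" "0 < t"
  shows "\<bar>u - v\<bar> \<le> (1 + t) * (sqrt u - sqrt v)\<^sup>2 + v / t"
proof -
  define d where "d = sqrt u - sqrt v"
  have split: "u - v = d\<^sup>2 + 2 * d * sqrt v"
    using assms by (simp add: d_def power2_diff algebra_simps)
  have "0 \<le> (t * \<bar>d\<bar> - sqrt v)\<^sup>2 / t"
    using assms by simp
  then have cross: "\<bar>2 * d * sqrt v\<bar> \<le> t * d\<^sup>2 + v / t"
    using assms by (simp add: power2_diff abs_mult field_simps power2_eq_square)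
  have "\<bar>u - v\<bar> \<le> d\<^sup>2 + \<bar>2 * d * sqrt v\<bar>"
    unfolding split using abs_triangle_ineq[of "d\<^sup>2" "2 * d * sqrt v"] by simp
  with cross show ?thesis
    by (simp add: d_def algebra_simps)
qed

text \<open>No integrability of \<open>\<phi>\<close> is needed: if it fails, the Bochner integral of \<open>\<phi>\<close> is \<open>0\<close>.\<close>

lemma abs_integral_le_integral_dominating:
  fixes \<phi> k :: "'a \<Rightarrow> real"
  assumes "integrable M k" and "\<And>x. x \<in> space M \<Longrightarrow> \<bar>\<phi> x\<bar> \<le> k x"
  shows "\<bar>\<integral>x. \<phi> x \<partial>M\<bar> \<le> (\<integral>x. k x \<partial>M)"
proof -
  have k_nonneg: "\<And>x. x \<in> space M \<Longrightarrow> 0 \<le> k x"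
    using assms(2) by (meson abs_ge_zero order_trans)
  have "(\<integral>x. \<phi> x \<partial>M) \<le> (\<integral>x. k x \<partial>M)"
    using assms by (intro integral_mono' k_nonneg) (auto simp: abs_le_iff)
  moreover have "(\<integral>x. - \<phi> x \<partial>M) \<le> (\<integral>x. k x \<partial>M)"
    using assms by (intro integral_mono' k_nonneg) (auto simp: abs_le_iff)
  ultimately show ?thesis
    by (simp add: abs_le_iff)
qed

lemma integrable_bounded_mult:
  fixes w h :: "'a \<Rightarrow> real"
  assumes "integrable M h" and "w \<in> borel_measurable M"
    and "\<And>x. x \<in> space M \<Longrightarrow> \<bar>w x\<bar> \<le> W"
  shows "integrable M (\<lambda>x. w x * h x)"
proof (rule Bochner_Integration.integrable_bound)
  show "integrable M (\<lambda>x. W * \<bar>h x\<bar>)"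
    using assms(1) by simp
  show "(\<lambda>x. w x * h x) \<in> borel_measurable M"
    using assms(1,2) by (simp add: borel_measurable_integrable)
  show "AE x in M. norm (w x * h x) \<le> norm (W * \<bar>h x\<bar>)"
  proof (intro AE_I2 impI)
    fix x assume "x \<in> space M"
    then have "\<bar>w x\<bar> \<le> \<bar>W\<bar>"
      using assms(3) by fastforce
    then show "norm (w x * h x) \<le> norm (W * \<bar>h x\<bar>)"
      by (simp add: abs_mult mult_right_mono)
  qed
qed

lemma integral_bounded_mult_le:
  fixes w h :: "'a \<Rightarrow> real"
  assumes "integrable M h" and "\<And>x. x \<in> space M \<Longrightarrow> 0 \<le> h x"
    and "\<And>x. x \<in> space M \<Longrightarrow> \<bar>w x\<bar> \<le> W"
  shows "(\<integral>x. w x * h x \<partial>M) \<le> W * (\<integral>x. h x \<partial>M)"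
proof -
  have "(\<integral>x. w x * h x \<partial>M) \<le> (\<integral>x. W * h x \<partial>M)"
  proof (rule integral_mono')
    fix x assume x: "x \<in> space M"
    have "w x * h x \<le> \<bar>w x\<bar> * h x"
      using assms(2)[OF x] by (intro mult_right_mono) auto
    also have "\<dots> \<le> W * h x"
      using assms(2,3)[OF x] by (intro mult_right_mono)
    finally show "w x * h x \<le> W * h x" .
    show "0 \<le> W * h x"
      using assms(2,3)[OF x] by (meson abs_ge_zero order_trans mult_nonneg_nonneg)
  qed (use assms(1) in simp)
  then show ?thesis
    by simp
qed

lemma integrable_sqrt_diff_square:
  fixes f g :: "'a \<Rightarrow> real"
  assumes "integrable M f" "integrable M g"
    and "\<And>x. x \<in> space M \<Longrightarrow> 0 \<le> f x" "\<And>x. x \<in> space M \<Longrightarrow> 0 \<le> g x"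
  shows "integrable M (\<lambda>x. (sqrt (f x) - sqrt (g x))\<^sup>2)"
proof (rule Bochner_Integration.integrable_bound)
  show "integrable M (\<lambda>x. f x + g x)"
    using assms(1,2) by simp
  show "(\<lambda>x. (sqrt (f x) - sqrt (g x))\<^sup>2) \<in> borel_measurable M"
    using assms(1,2) by (simp add: borel_measurable_integrable)
  show "AE x in M. norm ((sqrt (f x) - sqrt (g x))\<^sup>2) \<le> norm (f x + g x)"
  proof (intro AE_I2 impI)
    fix x assume x: "x \<in> space M"
    then have "(sqrt (f x) - sqrt (g x))\<^sup>2 \<le> f x + g x"
      using assms(3,4) by (simp add: power2_diff real_sqrt_mult[symmetric])
    then show "norm ((sqrt (f x) - sqrt (g x))\<^sup>2) \<le> norm (f x + g x)"
      using assms(3,4)[OF x] by simp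
  qed
qed

lemma abs_integral_weighted_diff_le:
  fixes f f0 w :: "'a \<Rightarrow> real"
  assumes f: "integrable M f" and f0: "integrable M f0"
    and nonneg: "\<And>x. x \<in> space M \<Longrightarrow> 0 \<le> f x" "\<And>x. x \<in> space M \<Longrightarrow> 0 \<le> f0 x"
    and w: "w \<in> borel_measurable M" "\<And>x. x \<in> space M \<Longrightarrow> 0 \<le> w x \<and> w x \<le> W"
    and "0 < t"
  shows "\<bar>\<integral>x. w x * (f x - f0 x) \<partial>M\<bar>
           \<le> (1 + t) * (\<integral>x. w x * (sqrt (f x) - sqrt (f0 x))\<^sup>2 \<partial>M) + (\<integral>x. w x * f0 x \<partial>M) / t"
proof -
  have w_bound: "\<And>x. x \<in> space M \<Longrightarrow> \<bar>w x\<bar> \<le> W"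
    using w(2) by fastforce
  have int_wd: "integrable M (\<lambda>x. w x * (sqrt (f x) - sqrt (f0 x))\<^sup>2)"
    using integrable_sqrt_diff_square[OF f f0 nonneg] w(1) w_bound by (rule integrable_bounded_mult)
  have int_wf0: "integrable M (\<lambda>x. w x * f0 x)"
    using f0 w(1) w_bound by (rule integrable_bounded_mult)
  have "\<bar>\<integral>x. w x * (f x - f0 x) \<partial>M\<bar>
      \<le> (\<integral>x. (1 + t) * (w x * (sqrt (f x) - sqrt (f0 x))\<^sup>2) + w x * f0 x / t \<partial>M)"
  proof (rule abs_integral_le_integral_dominating)
    show "integrable M (\<lambda>x. (1 + t) * (w x * (sqrt (f x) - sqrt (f0 x))\<^sup>2) + w x * f0 x / t)"
      using int_wd int_wf0 by simp
    fix x assume x: "x \<in> space M"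
    have "\<bar>w x * (f x - f0 x)\<bar> = w x * \<bar>f x - f0 x\<bar>"
      using w(2)[OF x] by (simp add: abs_mult)
    also have "\<dots> \<le> w x * ((1 + t) * (sqrt (f x) - sqrt (f0 x))\<^sup>2 + f0 x / t)"
      using w(2)[OF x] nonneg[OF x] \<open>0 < t\<close>
      by (intro mult_left_mono abs_diff_le_sqrt_diff_square) auto
    finally show "\<bar>w x * (f x - f0 x)\<bar>
        \<le> (1 + t) * (w x * (sqrt (f x) - sqrt (f0 x))\<^sup>2) + w x * f0 x / t"
      by (simp add: algebra_simps)
  qed
  also have "\<dots> = (1 + t) * (\<integral>x. w x * (sqrt (f x) - sqrt (f0 x))\<^sup>2 \<partial>M) + (\<integral>x. w x * f0 x \<partial>M) / t"
    using int_wd int_wf0 by simp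
  finally show ?thesis .
qed

abbreviation lborel01 :: "real measure" where
  "lborel01 \<equiv> restrict_space lborel {0..1}"

lemma set_integral_eq_integral_lborel01:
  fixes h :: "real \<Rightarrow> real"
  shows "(LINT x:{0..1}|lborel. h x) = (\<integral>x. h x \<partial>lborel01)"
  unfolding set_lebesgue_integral_def by (rule integral_restrict_space[symmetric]) simp

lemma finite_measure_lborel01: "finite_measure lborel01"
  by (auto intro!: finite_measureI simp: emeasure_restrict_space)

lemma prob_density01_lborel01:
  assumes "prob_density01 f"
  shows "integrable lborel01 f" and "\<And>x. x \<in> space lborel01 \<Longrightarrow> 0 \<le> f x"
    and "(\<integral>x. f x \<partial>lborel01) = 1"
  using assms
  by (auto simp: prob_density01_def set_integrable_def integrable_restrict_space
      set_integral_eq_integral_lborel01[symmetric])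

lemma abs_le_sup_norm01:
  assumes "bdd_above ((\<lambda>x. \<bar>g x\<bar>) ` {0..1})" and "x \<in> {0..1}"
  shows "\<bar>g x\<bar> \<le> sup_norm01 g"
  unfolding sup_norm01_def using assms by (rule cSUP_upper2) simp

lemma sup_norm01_nonneg:
  assumes "bdd_above ((\<lambda>x. \<bar>g x\<bar>) ` {0..1})"
  shows "0 \<le> sup_norm01 g"
  using abs_le_sup_norm01[OF assms, of 0] by simp

lemma power2_le_sup_norm01_power2:
  assumes "bdd_above ((\<lambda>x. \<bar>g x\<bar>) ` {0..1})" and "x \<in> {0..1}"
  shows "(g x)\<^sup>2 \<le> (sup_norm01 g)\<^sup>2"
  using abs_le_sup_norm01[OF assms] by (metis abs_ge_zero power2_abs power_mono)

lemma hellinger_square: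
  "(hellinger f f0)\<^sup>2 = (\<integral>x. (sqrt (f x) - sqrt (f0 x))\<^sup>2 \<partial>lborel01)"
  unfolding hellinger_def set_integral_eq_integral_lborel01
  by (simp add: integral_nonneg_AE)

lemma hellinger_nonneg: "0 \<le> hellinger f f0"
  unfolding hellinger_def set_integral_eq_integral_lborel01 by (simp add: integral_nonneg_AE)

lemma L2_norm01_nonneg: "0 \<le> L2_norm01 g"
  unfolding L2_norm01_def set_integral_eq_integral_lborel01 by (simp add: integral_nonneg_AE)

lemma L2_norm01_square: "(L2_norm01 g)\<^sup>2 = (\<integral>x. (g x)\<^sup>2 \<partial>lborel01)"
  unfolding L2_norm01_def set_integral_eq_integral_lborel01
  by (simp add: integral_nonneg_AE)

lemma sup_norm01_pos:
  assumes "prob_density01 f" and "bdd_above ((\<lambda>x. \<bar>f x\<bar>) ` {0..1})"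
  shows "0 < sup_norm01 f"
proof (rule ccontr)
  assume "\<not> 0 < sup_norm01 f"
  then have vanish: "\<And>x. x \<in> space lborel01 \<Longrightarrow> f x = 0"
    using abs_le_sup_norm01[OF assms(2)] prob_density01_lborel01(2)[OF assms(1)] by force
  have "(\<integral>x. f x \<partial>lborel01) = (\<integral>x. (0::real) \<partial>lborel01)"
    by (rule Bochner_Integration.integral_cong) (simp_all add: vanish)
  with prob_density01_lborel01(3)[OF assms(1)] show False
    by simp
qed

lemma weighted_hellinger_le:
  assumes "prob_density01 f" and "prob_density01 f0"
    and "bdd_above ((\<lambda>x. \<bar>g x\<bar>) ` {0..1})"
  shows "(\<integral>x. (g x)\<^sup>2 * (sqrt (f x) - sqrt (f0 x))\<^sup>2 \<partial>lborel01) \<le> (hellinger f f0 * sup_norm01 g)\<^sup>2"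
proof -
  note f = prob_density01_lborel01[OF assms(1)] and f0 = prob_density01_lborel01[OF assms(2)]
  have "(\<integral>x. (g x)\<^sup>2 * (sqrt (f x) - sqrt (f0 x))\<^sup>2 \<partial>lborel01)
      \<le> (sup_norm01 g)\<^sup>2 * (hellinger f f0)\<^sup>2"
    unfolding hellinger_square using f f0 power2_le_sup_norm01_power2[OF assms(3)]
    by (intro integral_bounded_mult_le integrable_sqrt_diff_square) auto
  then show ?thesis
    by (simp add: power_mult_distrib mult.commute)
qed

lemma weighted_density_le_L2_norm01:
  assumes "prob_density01 f0" and "bdd_above ((\<lambda>x. \<bar>f0 x\<bar>) ` {0..1})"
    and "g \<in> borel_measurable lborel" and "bdd_above ((\<lambda>x. \<bar>g x\<bar>) ` {0..1})"
  shows "(\<integral>x. (g x)\<^sup>2 * f0 x \<partial>lborel01) \<le> sup_norm01 f0 * (L2_norm01 g)\<^sup>2"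
proof -
  have "integrable lborel01 (\<lambda>x. (g x)\<^sup>2)"
    using assms(3) power2_le_sup_norm01_power2[OF assms(4)]
    by (intro finite_measure.integrable_const_bound[OF finite_measure_lborel01,
          where B = "(sup_norm01 g)\<^sup>2"]) (auto simp: measurable_restrict_space1)
  then have "(\<integral>x. f0 x * (g x)\<^sup>2 \<partial>lborel01) \<le> sup_norm01 f0 * (\<integral>x. (g x)\<^sup>2 \<partial>lborel01)"
    using abs_le_sup_norm01[OF assms(2)] by (intro integral_bounded_mult_le) auto
  then show ?thesis
    by (simp add: L2_norm01_square mult.commute)
qed

lemma balanced_weights_bound:
  fixes a b A B :: real
  assumes "0 < a" "0 < b" "A \<le> a\<^sup>2" "B \<le> b\<^sup>2"
  shows "(1 + b / a) * A + B / (b / a) \<le> a\<^sup>2 + 2 * a * b"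
proof -
  have "(1 + b / a) * A + B / (b / a) \<le> (1 + b / a) * a\<^sup>2 + b\<^sup>2 / (b / a)"
    using assms by (intro add_mono mult_left_mono divide_right_mono) auto
  also have "\<dots> = a\<^sup>2 + 2 * a * b"
    using assms by (simp add: field_simps power2_eq_square)
  finally show ?thesis .
qed

theorem lemma6:
  fixes f f0 g :: "real \<Rightarrow> real" and C1 C2 :: real
  assumes "prob_density01 f" and "prob_density01 f0"
    and "bdd_above ((\<lambda>x. \<bar>f0 x\<bar>) ` {0..1})"
    and "g \<in> borel_measurable lborel"
    and "bdd_above ((\<lambda>x. \<bar>g x\<bar>) ` {0..1})"
    and "C1 > 0" and "C2 > 0"
    and "hellinger f f0 * sup_norm01 g \<le> C1"
    and "L2_norm01 g \<le> C2"
  shows "\<bar>LINT x:{0..1}|lborel. (g x)^2 * (f x - f0 x)\<bar>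
           \<le> C1^2 + C1 * sqrt (4 * C2^2 * sup_norm01 f0 + C1^2)"
proof -
  define F where "F = sup_norm01 f0"
  have "F > 0"
    unfolding F_def using assms(2,3) by (rule sup_norm01_pos)
  have "\<bar>\<integral>x. (g x)\<^sup>2 * (f x - f0 x) \<partial>lborel01\<bar>
      \<le> (1 + C2 * sqrt F / C1) * (\<integral>x. (g x)\<^sup>2 * (sqrt (f x) - sqrt (f0 x))\<^sup>2 \<partial>lborel01)
         + (\<integral>x. (g x)\<^sup>2 * f0 x \<partial>lborel01) / (C2 * sqrt F / C1)"
    using prob_density01_lborel01[OF assms(1)] prob_density01_lborel01[OF assms(2)]
      power2_le_sup_norm01_power2[OF assms(5)] assms(4,6,7) \<open>F > 0\<close>
    by (intro abs_integral_weighted_diff_le[where W = "(sup_norm01 g)\<^sup>2"])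
      (auto simp: measurable_restrict_space1)
  also have "\<dots> \<le> C1\<^sup>2 + 2 * C1 * (C2 * sqrt F)"
  proof (rule balanced_weights_bound)
    show "(\<integral>x. (g x)\<^sup>2 * (sqrt (f x) - sqrt (f0 x))\<^sup>2 \<partial>lborel01) \<le> C1\<^sup>2"
      using weighted_hellinger_le[OF assms(1,2,5)] power_mono[OF assms(8), of 2]
        hellinger_nonneg sup_norm01_nonneg[OF assms(5)] by simp
    have "F * (L2_norm01 g)\<^sup>2 \<le> F * C2\<^sup>2"
      using assms(9) L2_norm01_nonneg \<open>F > 0\<close> by (intro mult_left_mono power_mono) auto
    then show "(\<integral>x. (g x)\<^sup>2 * f0 x \<partial>lborel01) \<le> (C2 * sqrt F)\<^sup>2"
      using order_trans[OF weighted_density_le_L2_norm01[OF assms(2-5)]] \<open>F > 0\<close>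
      by (simp add: F_def power_mult_distrib mult.commute)
  qed (use assms(6,7) \<open>F > 0\<close> in auto)
  also have "\<dots> \<le> C1\<^sup>2 + C1 * sqrt (4 * C2\<^sup>2 * F + C1\<^sup>2)"
  proof -
    have "2 * (C2 * sqrt F) = sqrt (4 * C2\<^sup>2 * F)"
      using assms(7) \<open>F > 0\<close> by (simp add: real_sqrt_mult)
    then show ?thesis
      using assms(6) by (simp add: mult_left_mono)
  qed
  finally show ?thesis
    by (simp add: set_integral_eq_integral_lborel01 F_def)
qed

end
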